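(* Assume the predator–prey parasite model described in the context, and suppose Assumptions (A) and (B) hold. Then for every $t>0$, \[ \frac{\mathrm{var}(Y_{t})}{\mathbb{E}(Y_{t})} \leq \frac{\mathbb{E}(\tilde{X}^{2}_{t})}{\mathbb{E}(\tilde{X}_{t})}, \] and \[ \frac{\mathrm{var}(Y_{t})}{\mathbb{E}(Y_{t})} \geq \frac{1}{\Psi(t)} \int^{t}_{0} \left(\frac{\mathbb{E}(\tilde{X}^{2}_{s})}{\mathbb{E}(\tilde{X}_{s})}\right) \psi(s)\, ds \geq \int^{\infty}_{0} \left(\frac{\mathrm{var}(X_{r})}{\mathbb{E}(X_{r})} + \mathbb{E}(X_{r}) \right) \left( \frac{1}{\Psi(t)} \int^{t}_{0} f_{\tilde{A}_{s}} (r)\, \psi(s)\, ds \right) dr. \]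
   Context: Model. The parasite burden of a prey aged $t\ge 0$ is $X_t$, where $(X_t)_{t\ge0}$ is a non-decreasing integer-valued stochastic process with $X_0=0$ (all moments used are assumed finite, and denominators positive). Prey ages in the prey population have probability density $f_A$ on $[0,\infty)$. A predator encounters random members of the prey population at the times of a non-homogeneous Poisson process with intensity $\phi:[0,\infty)\to[0,\infty)$; when a predator aged $t$ encounters a prey aged $u$, it consumes it with probability $p(u,t)\in[0,1]$. Hence the consumption times form a Poisson process with intensity $\psi(t)=\phi(t)\int_0^\infty p(u,t)f_A(u)\,du$; set $\Psi(t)=\int_0^t\psi(s)\,ds$. The age $\tilde A_t$ of a prey consumed by a predator aged $t$ has density $f_{\tilde A_t}(a)= p(a,t)f_A(a)/\int_0^\infty p(u,t)f_A(u)\,du$, and the parasite burden of such a consumed prey is $\tilde X_t = X_{\tilde A_t}$ (with $\tilde A_t$ independent of the process $X$). A consumed prey transfers all its parasites to the predator, and the contributions of different consumed prey are independent. Thus the predator's burden $Y_t$ at age $t$ (with $Y_0=0$) is the sum, over the consumption times $s\le t$, of independent copies of $\tilde X_s$; in particular $\mathbb{E}(Y_t)=\int_0^t\mathbb{E}(\tilde X_s)\psi(s)\,ds$ and $\mathrm{var}(Y_t)=\int_0^t \mathbb{E}(\tilde X_s^2)\psi(s)\,ds$. Likelihood ratio order: for random variables $U,V$ (both discrete or both continuous) with mass/density functions $p_U,p_V$, write $U\le_{lr}V$ if $p_V(w)/p_U(w)$ is non-decreasing in $w$ over the union of the supports of $U$ and $V$. Assumption (A): for all $0\le s\le t$, $X_s\le_{lr}X_t$.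 Assumption (B): for all $0\le s<t$, the ratio $p(u,t)/p(u,s)$ is a non-decreasing function of $u$. *)

theory Defs
  imports "HOL-Probability.Probability"
begin

text \<open>Extended ratio a/b with the convention a/0 = infinity (used only on the union of
  supports, where a and b are not both zero).\<close>
definition ext_ratio :: "real \<Rightarrow> real \<Rightarrow> ereal" where
  "ext_ratio a b = (if b = 0 then \<infinity> else ereal (a / b))"

text \<open>Likelihood ratio order for discrete (nat-valued) random variables given by their
  mass functions: U \<le>lr V iff pV/pU is non-decreasing on the union of the supports.\<close>
definition lr_le :: "(nat \<Rightarrow> real) \<Rightarrow> (nat \<Rightarrow> real) \<Rightarrow> bool" where
  "lr_le pU pV \<longleftrightarrow> mono_on {w. pU w > 0 \<or> pV w > 0} (\<lambda>w. ext_ratio (pV w) (pU w))"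

definition pmfX :: "'w measure \<Rightarrow> (real \<Rightarrow> 'w \<Rightarrow> nat) \<Rightarrow> real \<Rightarrow> nat \<Rightarrow> real" where
  "pmfX M X r k = measure M {\<omega> \<in> space M. X r \<omega> = k}"

definition meanX :: "'w measure \<Rightarrow> (real \<Rightarrow> 'w \<Rightarrow> nat) \<Rightarrow> real \<Rightarrow> real" where
  "meanX M X r = integral\<^sup>L M (\<lambda>\<omega>. real (X r \<omega>))"

definition sqmX :: "'w measure \<Rightarrow> (real \<Rightarrow> 'w \<Rightarrow> nat) \<Rightarrow> real \<Rightarrow> real" where
  "sqmX M X r = integral\<^sup>L M (\<lambda>\<omega>. (real (X r \<omega>))\<^sup>2)"

definition varX :: "'w measure \<Rightarrow> (real \<Rightarrow> 'w \<Rightarrow> nat) \<Rightarrow> real \<Rightarrow> real" where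
  "varX M X r = integral\<^sup>L M (\<lambda>\<omega>. (real (X r \<omega>) - meanX M X r)\<^sup>2)"

text \<open>Normalising constant: probability that an encountered prey is consumed by a predator of age t.\<close>
definition cons_norm :: "(real \<Rightarrow> real \<Rightarrow> real) \<Rightarrow> (real \<Rightarrow> real) \<Rightarrow> real \<Rightarrow> real" where
  "cons_norm p fA t = set_lebesgue_integral lborel {0..} (\<lambda>u. p u t * fA u)"

definition psi :: "(real \<Rightarrow> real) \<Rightarrow> (real \<Rightarrow> real \<Rightarrow> real) \<Rightarrow> (real \<Rightarrow> real) \<Rightarrow> real \<Rightarrow> real" where
  "psi \<phi> p fA t = \<phi> t * cons_norm p fA t"

definition Psi :: "(real \<Rightarrow> real) \<Rightarrow> (real \<Rightarrow> real \<Rightarrow> real) \<Rightarrow> (real \<Rightarrow> real) \<Rightarrow> real \<Rightarrow> real" where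
  "Psi \<phi> p fA t = set_lebesgue_integral lborel {0..t} (psi \<phi> p fA)"

text \<open>Density of the age of a prey consumed by a predator aged t.\<close>
definition fAt :: "(real \<Rightarrow> real \<Rightarrow> real) \<Rightarrow> (real \<Rightarrow> real) \<Rightarrow> real \<Rightarrow> real \<Rightarrow> real" where
  "fAt p fA t a = p a t * fA a / cons_norm p fA t"

text \<open>Moments of the consumed prey burden X~_t = X_{A~_t}, A~_t independent of X.\<close>
definition meanXt :: "'w measure \<Rightarrow> (real \<Rightarrow> 'w \<Rightarrow> nat) \<Rightarrow> (real \<Rightarrow> real \<Rightarrow> real) \<Rightarrow> (real \<Rightarrow> real) \<Rightarrow> real \<Rightarrow> real" where
  "meanXt M X p fA t = set_lebesgue_integral lborel {0..} (\<lambda>a. meanX M X a * fAt p fA t a)"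

definition sqmXt :: "'w measure \<Rightarrow> (real \<Rightarrow> 'w \<Rightarrow> nat) \<Rightarrow> (real \<Rightarrow> real \<Rightarrow> real) \<Rightarrow> (real \<Rightarrow> real) \<Rightarrow> real \<Rightarrow> real" where
  "sqmXt M X p fA t = set_lebesgue_integral lborel {0..} (\<lambda>a. sqmX M X a * fAt p fA t a)"

text \<open>Mean and variance of the predator burden Y_t (compound Poisson sum).\<close>
definition meanY :: "'w measure \<Rightarrow> (real \<Rightarrow> 'w \<Rightarrow> nat) \<Rightarrow> (real \<Rightarrow> real \<Rightarrow> real) \<Rightarrow> (real \<Rightarrow> real) \<Rightarrow> (real \<Rightarrow> real) \<Rightarrow> real \<Rightarrow> real" where
  "meanY M X p fA \<phi> t = set_lebesgue_integral lborel {0..t} (\<lambda>s. meanXt M X p fA s * psi \<phi> p fA s)"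

definition varY :: "'w measure \<Rightarrow> (real \<Rightarrow> 'w \<Rightarrow> nat) \<Rightarrow> (real \<Rightarrow> real \<Rightarrow> real) \<Rightarrow> (real \<Rightarrow> real) \<Rightarrow> (real \<Rightarrow> real) \<Rightarrow> real \<Rightarrow> real" where
  "varY M X p fA \<phi> t = set_lebesgue_integral lborel {0..t} (\<lambda>s. sqmXt M X p fA s * psi \<phi> p fA s)"

end

theory Submission
  imports Defs
begin

text \<open>Every inequality compares weighted averages of a non-decreasing function, and follows from
  one fact: the weighted mean of a non-decreasing function grows when the weight grows in the
  likelihood-ratio order. By (A) the size-biased laws \<open>k * P(X_r = k)\<close> grow in this order, so
  \<open>E(X_r\<^sup>2) / E(X_r)\<close> is non-decreasing in \<open>r\<close>; by (B) so do the consumed-age densities, hence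
  \<open>E(X~_s)\<close> and \<open>E(X~_s\<^sup>2) / E(X~_s)\<close> are non-decreasing in \<open>s\<close>. Now \<open>var(Y_t) / E(Y_t)\<close> is the
  average of \<open>E(X~_s\<^sup>2) / E(X~_s)\<close> over \<open>[0, t]\<close> with weight \<open>E(X~_s) \<psi>(s)\<close>: it is at most the value
  at \<open>t\<close>, and at least the average with the smaller weight \<open>\<psi>(s)\<close>. For the last bound, biasing
  the consumed-age density by the increasing \<open>E(X_r)\<close> gives
  \<open>E(X~_s\<^sup>2) / E(X~_s) \<ge> \<integral> E(X_r\<^sup>2) / E(X_r) f_{A~_s}(r) dr\<close>, and Tonelli exchanges the integrals.\<close>

lemma mono_ext_ratio_imp_cross_le:
  fixes f g :: "'a::linorder \<Rightarrow> real"
  assumes mono: "mono_on S (\<lambda>w. ext_ratio (f w) (g w))" and "a \<le> b"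
    and nonneg: "0 \<le> f a" "0 \<le> g a" "0 \<le> f b" "0 \<le> g b"
    and a_in: "0 < f a \<or> 0 < g a \<Longrightarrow> a \<in> S" and b_in: "0 < f b \<or> 0 < g b \<Longrightarrow> b \<in> S"
  shows "f a * g b \<le> f b * g a"
proof (cases "f a * g b = 0")
  case True
  then show ?thesis using nonneg by (metis mult_nonneg_nonneg)
next
  case False
  then have "0 < f a" "0 < g b" using nonneg by (auto simp: less_le)
  then have "ext_ratio (f a) (g a) \<le> ext_ratio (f b) (g b)"
    using mono a_in b_in \<open>a \<le> b\<close> by (auto simp: mono_on_def)
  then have "g a \<noteq> 0" and "f a / g a \<le> f b / g b"
    using \<open>0 < g b\<close> by (auto simp: ext_ratio_def split: if_splits)
  then show ?thesis using nonneg \<open>0 < g b\<close> by (simp add: field_simps)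
qed

lemma likelihood_ratio_sign_change:
  fixes u v :: "'a::linorder \<Rightarrow> real"
  assumes cross: "\<And>a b. a \<in> S \<Longrightarrow> b \<in> S \<Longrightarrow> a < b \<Longrightarrow> v a * u b \<le> v b * u a"
    and "x \<in> S" "b \<in> S" "v x < u x" "u b < v b"
    and nonneg: "0 \<le> v x" "0 \<le> u b"
  shows "x < b"
proof (rule ccontr)
  assume "\<not> x < b"
  moreover have "x \<noteq> b" using \<open>v x < u x\<close> \<open>u b < v b\<close> by auto
  ultimately have "b < x" by simp
  from cross[OF \<open>b \<in> S\<close> \<open>x \<in> S\<close> this] have "v b * u x \<le> v x * u b" .
  moreover have "u b * u x < v b * u x"
    using \<open>u b < v b\<close> \<open>v x < u x\<close> nonneg by (intro mult_strict_right_mono) auto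
  moreover have "v x * u b \<le> u x * u b"
    using \<open>v x < u x\<close> nonneg by (intro mult_right_mono) auto
  ultimately show False by (simp add: mult.commute)
qed

text \<open>With \<open>D = q2 - q1\<close> and \<open>K\<close> the infimum of \<open>h\<close> on \<open>{D > 0}\<close>, the ratio condition puts
  \<open>{D < 0}\<close> to the left of \<open>{D > 0}\<close>, so \<open>(h - K) * D \<ge> 0\<close>, while \<open>\<integral>K * D = 0\<close>.\<close>

lemma integral_mono_of_likelihood_ratio:
  fixes q1 q2 h :: "'a::linorder \<Rightarrow> real"
  assumes int: "integrable N q1" "integrable N q2"
      "integrable N (\<lambda>x. h x * q1 x)" "integrable N (\<lambda>x. h x * q2 x)"
    and q1_nonneg: "\<And>x. x \<in> space N \<Longrightarrow> 0 \<le> q1 x"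
    and q2_nonneg: "\<And>x. x \<in> space N \<Longrightarrow> 0 \<le> q2 x"
    and h_nonneg: "\<And>x. x \<in> space N \<Longrightarrow> 0 \<le> h x"
    and mass: "integral\<^sup>L N q1 = integral\<^sup>L N q2"
    and h_mono: "mono_on (space N) h"
    and cross: "\<And>a b. a \<in> space N \<Longrightarrow> b \<in> space N \<Longrightarrow> a < b \<Longrightarrow> q2 a * q1 b \<le> q2 b * q1 a"
  shows "integral\<^sup>L N (\<lambda>x. h x * q1 x) \<le> integral\<^sup>L N (\<lambda>x. h x * q2 x)"
proof -
  define D where "D x = q2 x - q1 x" for x
  have D_int: "integrable N D" and hD_int: "integrable N (\<lambda>x. h x * D x)"
    unfolding D_def using int by (auto simp: right_diff_distrib)
  have hD: "integral\<^sup>L N (\<lambda>x. h x * D x) =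
      integral\<^sup>L N (\<lambda>x. h x * q2 x) - integral\<^sup>L N (\<lambda>x. h x * q1 x)"
    using int by (simp add: D_def right_diff_distrib)
  have D_zero: "integral\<^sup>L N D = 0" unfolding D_def using int mass by simp
  define P where "P = {x \<in> space N. 0 < D x}"
  show ?thesis
  proof (cases "P = {}")
    case True
    then have "AE x in N. D x = 0"
      using integral_nonneg_eq_0_iff_AE[of N "\<lambda>x. - D x"] D_int D_zero
      by (force simp: P_def not_less)
    then have "integral\<^sup>L N (\<lambda>x. h x * D x) = 0" by (auto intro: integral_eq_zero_AE)
    then show ?thesis using hD by simp
  next
    case False
    define K where "K = Inf (h ` P)"
    have K_le: "K \<le> h x" if "x \<in> P" for x
      unfolding K_def using that h_nonneg by (intro cInf_lower bdd_belowI[of _ 0]) (auto simp: P_def)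
    have left_of_P: "x < b" if x: "x \<in> space N" "D x < 0" and "b \<in> P" for x b
    proof (rule likelihood_ratio_sign_change[where S="space N" and u=q1 and v=q2, OF cross])
      show "b \<in> space N" "q1 b < q2 b" using \<open>b \<in> P\<close> by (auto simp: P_def D_def)
      then show "0 \<le> q1 b" using q1_nonneg by blast
      show "q2 x < q1 x" using x(2) by (simp add: D_def)
    qed (use x(1) q2_nonneg in auto)
    have "0 \<le> (h x - K) * D x" if x: "x \<in> space N" for x
    proof (cases "D x < 0")
      case True
      have "h x \<le> h b" if "b \<in> P" for b
        using h_mono x that left_of_P[OF x True that] by (auto simp: P_def mono_on_def)
      then have "h x \<le> K"
        unfolding K_def using False by (intro cInf_greatest) auto
      then show ?thesis using True by (intro mult_nonpos_nonpos) auto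
    next
      case False
      then show ?thesis using K_le[of x] x by (cases "D x = 0") (auto simp: P_def)
    qed
    then have "0 \<le> integral\<^sup>L N (\<lambda>x. (h x - K) * D x)"
      by (intro integral_nonneg_AE AE_I2) auto
    also have "\<dots> = integral\<^sup>L N (\<lambda>x. h x * D x) - K * integral\<^sup>L N D"
      using hD_int D_int by (simp add: left_diff_distrib)
    finally show ?thesis using D_zero hD by simp
  qed
qed

lemma weighted_mean_mono_of_likelihood_ratio:
  fixes q1 q2 h :: "'a::linorder \<Rightarrow> real"
  assumes int: "integrable N q1" "integrable N q2"
      "integrable N (\<lambda>x. h x * q1 x)" "integrable N (\<lambda>x. h x * q2 x)"
    and q1_nonneg: "\<And>x. x \<in> space N \<Longrightarrow> 0 \<le> q1 x"
    and q2_nonneg: "\<And>x. x \<in> space N \<Longrightarrow> 0 \<le> q2 x"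
    and h_nonneg: "\<And>x. x \<in> space N \<Longrightarrow> 0 \<le> h x"
    and mass_pos: "0 < integral\<^sup>L N q1" "0 < integral\<^sup>L N q2"
    and h_mono: "mono_on (space N) h"
    and cross: "\<And>a b. a \<in> space N \<Longrightarrow> b \<in> space N \<Longrightarrow> a < b \<Longrightarrow> q2 a * q1 b \<le> q2 b * q1 a"
  shows "integral\<^sup>L N (\<lambda>x. h x * q1 x) / integral\<^sup>L N q1 \<le>
         integral\<^sup>L N (\<lambda>x. h x * q2 x) / integral\<^sup>L N q2"
proof -
  define c1 c2 where "c1 = integral\<^sup>L N q1" and "c2 = integral\<^sup>L N q2"
  have "integral\<^sup>L N (\<lambda>x. h x * (q1 x / c1)) \<le> integral\<^sup>L N (\<lambda>x. h x * (q2 x / c2))"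
  proof (rule integral_mono_of_likelihood_ratio[OF _ _ _ _ _ _ h_nonneg _ h_mono])
    fix a b assume ab: "a \<in> space N" "b \<in> space N" "a < b"
    have "q2 a * q1 b / (c1 * c2) \<le> q2 b * q1 a / (c1 * c2)"
      using cross[OF ab] mass_pos by (intro divide_right_mono) (auto simp: c1_def c2_def)
    then show "q2 a / c2 * (q1 b / c1) \<le> q2 b / c2 * (q1 a / c1)" by (simp add: field_simps)
  qed (use int q1_nonneg q2_nonneg mass_pos in \<open>auto simp: c1_def c2_def\<close>)
  then show ?thesis by (simp add: c1_def c2_def)
qed

lemma ennreal_integral_le_nn_integral:
  fixes f :: "'a \<Rightarrow> real"
  assumes "AE x in M. 0 \<le> f x"
  shows "ennreal (integral\<^sup>L M f) \<le> (\<integral>\<^sup>+ x. ennreal (f x) \<partial>M)"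
  using assms by (cases "integrable M f") (simp_all add: nn_integral_eq_integral not_integrable_integral_eq)

lemma integral_inner_integral_le:
  fixes H :: "real \<Rightarrow> real \<Rightarrow> real" and G :: "real \<Rightarrow> real"
  assumes H_measurable[measurable]: "(\<lambda>x. H (fst x) (snd x)) \<in> borel_measurable (lborel \<Otimes>\<^sub>M lborel)"
    and H_nonneg: "\<And>r s. 0 \<le> H r s"
    and inner: "AE s in lborel. (\<integral>\<^sup>+ r. ennreal (H r s) \<partial>lborel) \<le> ennreal (G s)"
    and G: "integrable lborel G" "\<And>s. 0 \<le> G s"
  shows "integral\<^sup>L lborel (\<lambda>r. integral\<^sup>L lborel (H r)) \<le> integral\<^sup>L lborel G"
proof (rule integral_real_bounded)
  have H_ennreal[measurable]: "(\<lambda>(r, s). ennreal (H r s)) \<in> borel_measurable (lborel \<Otimes>\<^sub>M lborel)"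
    unfolding case_prod_beta by measurable
  have "(\<integral>\<^sup>+ r. ennreal (integral\<^sup>L lborel (H r)) \<partial>lborel)
      \<le> (\<integral>\<^sup>+ r. (\<integral>\<^sup>+ s. ennreal (H r s) \<partial>lborel) \<partial>lborel)"
    using H_nonneg by (intro nn_integral_mono ennreal_integral_le_nn_integral) auto
  also have "\<dots> = (\<integral>\<^sup>+ s. (\<integral>\<^sup>+ r. ennreal (H r s) \<partial>lborel) \<partial>lborel)"
    using lborel_pair.Fubini'[OF H_ennreal] by simp
  also have "\<dots> \<le> (\<integral>\<^sup>+ s. ennreal (G s) \<partial>lborel)"
    using inner by (rule nn_integral_mono_AE)
  also have "\<dots> = ennreal (integral\<^sup>L lborel G)"
    using G by (intro nn_integral_eq_integral) auto
  finally show "(\<integral>\<^sup>+ r. ennreal (integral\<^sup>L lborel (H r)) \<partial>lborel) \<le> ennreal (integral\<^sup>L lborel G)" .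
qed (use G in auto)

lemma real_le_square: "real (n::nat) \<le> real n * real n"
  by (metis of_nat_mult of_nat_le_iff le_square)

locale parasite_burden =
  fixes M :: "'w measure" and X :: "real \<Rightarrow> 'w \<Rightarrow> nat"
  assumes M: "prob_space M"
    and X_meas: "\<And>r. r \<ge> 0 \<Longrightarrow> X r \<in> measurable M (count_space UNIV)"
    and X_0: "\<And>\<omega>. \<omega> \<in> space M \<Longrightarrow> X 0 \<omega> = 0"
    and X_mono: "\<And>\<omega> r r'. \<omega> \<in> space M \<Longrightarrow> 0 \<le> r \<Longrightarrow> r \<le> r' \<Longrightarrow> X r \<omega> \<le> X r' \<omega>"
    and X_mom: "\<And>r. r \<ge> 0 \<Longrightarrow> integrable M (\<lambda>\<omega>. (real (X r \<omega>))\<^sup>2)"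
    and meanX_pos: "\<And>r. r > 0 \<Longrightarrow> meanX M X r > 0"
    and A: "\<And>s r. 0 \<le> s \<Longrightarrow> s \<le> r \<Longrightarrow> lr_le (pmfX M X s) (pmfX M X r)"
begin

interpretation prob_space M by (rule M)

lemma burden_integrable: "r \<ge> 0 \<Longrightarrow> integrable M (\<lambda>\<omega>. real (X r \<omega>))"
  by (rule Bochner_Integration.integrable_bound[OF X_mom])
    (auto intro: measurable_compose[OF X_meas] measurable_count_space simp: power2_eq_square real_le_square)

lemma meanX_nonneg: "0 \<le> meanX M X r"
  unfolding meanX_def by simp

lemma sqmX_nonneg: "0 \<le> sqmX M X r"
  unfolding sqmX_def by simp

lemma meanX_le_sqmX: "r \<ge> 0 \<Longrightarrow> meanX M X r \<le> sqmX M X r"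
  unfolding meanX_def sqmX_def by (intro integral_mono burden_integrable X_mom) (auto simp: power2_eq_square real_le_square)

lemma meanX_mono: "0 \<le> s \<Longrightarrow> s \<le> r \<Longrightarrow> meanX M X s \<le> meanX M X r"
  unfolding meanX_def by (intro integral_mono burden_integrable) (auto intro: X_mono)

lemma meanX_zero: "meanX M X 0 = 0" and sqmX_zero: "sqmX M X 0 = 0" and varX_zero: "varX M X 0 = 0"
  unfolding varX_def meanX_def sqmX_def by (simp_all add: X_0 cong: Bochner_Integration.integral_cong)

lemma varX_eq: "r \<ge> 0 \<Longrightarrow> varX M X r = sqmX M X r - (meanX M X r)\<^sup>2"
proof -
  assume r: "r \<ge> 0"
  define m where "m = meanX M X r"
  have "varX M X r = integral\<^sup>L M (\<lambda>\<omega>. (real (X r \<omega>))\<^sup>2 - 2 * m * real (X r \<omega>) + m\<^sup>2)"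
    unfolding varX_def m_def[symmetric] by (simp add: power2_eq_square algebra_simps)
  also have "\<dots> = sqmX M X r - 2 * m * m + m\<^sup>2"
    using burden_integrable[OF r] X_mom[OF r] prob_space unfolding sqmX_def m_def meanX_def by simp
  finally show ?thesis unfolding m_def by (simp add: power2_eq_square)
qed

lemma distr_burden:
  assumes "r \<ge> 0"
  shows "distr M (count_space UNIV) (X r) = density (count_space UNIV) (\<lambda>k. ennreal (pmfX M X r k))"
proof (rule measure_eqI_countable[where A=UNIV])
  fix k :: nat
  have "emeasure (distr M (count_space UNIV) (X r)) {k} = emeasure M {\<omega> \<in> space M. X r \<omega> = k}"
    using X_meas[OF assms] by (subst emeasure_distr) (auto intro!: arg_cong[where f="emeasure M"])
  then show "emeasure (distr M (count_space UNIV) (X r)) {k} =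
      emeasure (density (count_space UNIV) (\<lambda>k. ennreal (pmfX M X r k))) {k}"
    by (simp add: emeasure_density nn_integral_count_space_indicator pmfX_def emeasure_eq_measure)
qed auto

lemma
  fixes f :: "nat \<Rightarrow> real"
  assumes "r \<ge> 0" and "integrable M (\<lambda>\<omega>. f (X r \<omega>))"
  shows integrable_pmfX_mult: "integrable (count_space UNIV) (\<lambda>k. pmfX M X r k * f k)"
    and integral_pmfX_mult:
      "integral\<^sup>L (count_space UNIV) (\<lambda>k. pmfX M X r k * f k) = integral\<^sup>L M (\<lambda>\<omega>. f (X r \<omega>))"
proof -
  have pmf_nonneg: "0 \<le> pmfX M X r k" for k unfolding pmfX_def by simp
  have "integrable (distr M (count_space UNIV) (X r)) f"
    using assms X_meas[OF assms(1)] by (subst integrable_distr_eq) auto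
  then show "integrable (count_space UNIV) (\<lambda>k. pmfX M X r k * f k)"
    unfolding distr_burden[OF assms(1)] using pmf_nonneg by (subst (asm) integrable_density) auto
  have "integral\<^sup>L M (\<lambda>\<omega>. f (X r \<omega>)) = integral\<^sup>L (distr M (count_space UNIV) (X r)) f"
    using X_meas[OF assms(1)] by (subst integral_distr) auto
  also have "\<dots> = integral\<^sup>L (count_space UNIV) (\<lambda>k. pmfX M X r k * f k)"
    unfolding distr_burden[OF assms(1)] using pmf_nonneg by (subst integral_density) auto
  finally show "integral\<^sup>L (count_space UNIV) (\<lambda>k. pmfX M X r k * f k) = integral\<^sup>L M (\<lambda>\<omega>. f (X r \<omega>))" ..
qed

text \<open>The size-biased mass functions \<open>k * pmfX r k\<close> inherit the likelihood-ratio order of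
  Assumption (A), and \<open>sqmX r / meanX r\<close> is the mean of the size-biased law.\<close>

lemma sqmX_div_meanX_mono:
  assumes "0 \<le> s" "s \<le> r"
  shows "sqmX M X s / meanX M X s \<le> sqmX M X r / meanX M X r"
proof (cases "s = 0")
  case True
  then show ?thesis by (simp add: sqmX_zero meanX_nonneg sqmX_nonneg)
next
  case False
  with assms have "0 \<le> r" by simp
  let ?q = "\<lambda>r k. pmfX M X r k * real k"
  have mass: "integral\<^sup>L (count_space UNIV) (?q r) = meanX M X r"
    and sq: "integral\<^sup>L (count_space UNIV) (\<lambda>k. real k * ?q r k) = sqmX M X r"
    and int: "integrable (count_space UNIV) (?q r)"
      "integrable (count_space UNIV) (\<lambda>k. real k * ?q r k)" if "0 \<le> r" for r
    using integral_pmfX_mult[OF that burden_integrable[OF that]]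
      integral_pmfX_mult[OF that X_mom[OF that]]
      integrable_pmfX_mult[OF that burden_integrable[OF that]]
      integrable_pmfX_mult[OF that X_mom[OF that]]
    by (simp_all add: meanX_def sqmX_def power2_eq_square mult_ac)
  have "integral\<^sup>L (count_space UNIV) (\<lambda>k. real k * ?q s k) / integral\<^sup>L (count_space UNIV) (?q s) \<le>
        integral\<^sup>L (count_space UNIV) (\<lambda>k. real k * ?q r k) / integral\<^sup>L (count_space UNIV) (?q r)"
  proof (rule weighted_mean_mono_of_likelihood_ratio)
    fix a b :: nat assume "a < b"
    have "pmfX M X r a * pmfX M X s b \<le> pmfX M X r b * pmfX M X s a"
      using A[OF assms] \<open>a < b\<close> unfolding lr_le_def
      by (intro mono_ext_ratio_imp_cross_le) (auto simp: pmfX_def)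
    from mult_right_mono[OF this, of "real a * real b"]
    show "?q r a * ?q s b \<le> ?q r b * ?q s a" by (simp add: mult_ac)
  qed (use int[OF \<open>0 \<le> s\<close>] int[OF \<open>0 \<le> r\<close>] mass meanX_pos False assms
        in \<open>auto simp: pmfX_def mono_on_def\<close>)
  then show ?thesis using mass sq assms \<open>0 \<le> r\<close> by simp
qed

text \<open>Extending the moments constantly to negative ages makes them monotone on all of \<open>\<real>\<close>,
  hence Borel measurable.\<close>

definition mean_burden :: "real \<Rightarrow> real" where
  "mean_burden r = meanX M X (max r 0)"

definition moment_ratio :: "real \<Rightarrow> real" where
  "moment_ratio r = sqmX M X (max r 0) / meanX M X (max r 0)"

lemma mean_burden_nonneg: "0 \<le> mean_burden r"
  by (simp add: mean_burden_def meanX_nonneg)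

lemma moment_ratio_nonneg: "0 \<le> moment_ratio r"
  by (simp add: moment_ratio_def meanX_nonneg sqmX_nonneg)

lemma mono_mean_burden: "mono mean_burden"
  unfolding mean_burden_def by (auto intro!: monoI meanX_mono)

lemma mono_moment_ratio: "mono moment_ratio"
  unfolding moment_ratio_def by (auto intro!: monoI sqmX_div_meanX_mono)

lemma mean_burden_measurable[measurable]: "mean_burden \<in> borel_measurable lborel"
  using borel_measurable_mono[OF mono_mean_burden] by simp

lemma moment_ratio_measurable[measurable]: "moment_ratio \<in> borel_measurable lborel"
  using borel_measurable_mono[OF mono_moment_ratio] by simp

lemma moment_ratio_mult_mean_burden: "moment_ratio r * mean_burden r = sqmX M X (max r 0)"
proof (cases "r > 0")
  case True
  then show ?thesis using meanX_pos[OF True] by (simp add: moment_ratio_def mean_burden_def)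
qed (simp add: moment_ratio_def mean_burden_def max_def sqmX_zero meanX_zero)

lemma moment_ratio_eq: "r \<ge> 0 \<Longrightarrow> varX M X r / meanX M X r + meanX M X r = moment_ratio r"
  using meanX_pos[of r]
  by (cases "r = 0") (auto simp: varX_zero meanX_zero sqmX_zero moment_ratio_def varX_eq
      field_simps power2_eq_square)

lemma moment_ratio_le: "r \<ge> 0 \<Longrightarrow> moment_ratio r \<le> moment_ratio 1 + sqmX M X r / meanX M X 1"
proof (cases "r \<le> 1")
  case True
  then show ?thesis using mono_moment_ratio sqmX_nonneg[of r] meanX_nonneg[of 1]
    by (auto simp: mono_def intro: add_increasing2)
next
  case False
  then have "meanX M X 1 \<le> meanX M X r" by (intro meanX_mono) auto
  then have "sqmX M X r / meanX M X r \<le> sqmX M X r / meanX M X 1"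
    using meanX_pos[of 1] sqmX_nonneg by (intro divide_left_mono) auto
  then show ?thesis using False moment_ratio_nonneg[of 1] by (simp add: moment_ratio_def)
qed

end

locale predator_prey = parasite_burden M X for M :: "'w measure" and X :: "real \<Rightarrow> 'w \<Rightarrow> nat" +
  fixes fA \<phi> :: "real \<Rightarrow> real" and p :: "real \<Rightarrow> real \<Rightarrow> real"
  assumes fA_meas: "fA \<in> borel_measurable borel"
    and fA_nonneg: "\<And>a. a \<ge> 0 \<Longrightarrow> fA a \<ge> 0"
    and fA_int: "set_integrable lborel {0..} fA"
    and phi_meas: "\<phi> \<in> borel_measurable borel"
    and phi_nonneg: "\<And>s. s \<ge> 0 \<Longrightarrow> \<phi> s \<ge> 0"
    and p_meas: "(\<lambda>x. p (fst x) (snd x)) \<in> borel_measurable borel"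
    and p_range: "\<And>u s. u \<ge> 0 \<Longrightarrow> s \<ge> 0 \<Longrightarrow> 0 \<le> p u s \<and> p u s \<le> 1"
    and psi_int: "\<And>T. T \<ge> 0 \<Longrightarrow> set_integrable lborel {0..T} (psi \<phi> p fA)"
    and Xt_mom: "\<And>s. s \<ge> 0 \<Longrightarrow> set_integrable lborel {0..} (\<lambda>a. sqmX M X a * fAt p fA s a)"
    and Y_mom: "\<And>T. T \<ge> 0 \<Longrightarrow>
                  set_integrable lborel {0..T} (\<lambda>s. sqmXt M X p fA s * psi \<phi> p fA s)"
    and norm_pos: "\<And>s. s \<ge> 0 \<Longrightarrow> cons_norm p fA s > 0"
    and meanXt_pos: "\<And>s. s > 0 \<Longrightarrow> meanXt M X p fA s > 0"
    and Psi_pos: "\<And>T. T > 0 \<Longrightarrow> Psi \<phi> p fA T > 0"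
    and meanY_pos: "\<And>T. T > 0 \<Longrightarrow> meanY M X p fA \<phi> T > 0"
    and B: "\<And>s r. 0 \<le> s \<Longrightarrow> s < r \<Longrightarrow>
              mono_on {u. u \<ge> 0 \<and> (p u s > 0 \<or> p u r > 0)} (\<lambda>u. ext_ratio (p u r) (p u s))"
begin

abbreviation "\<psi> \<equiv> psi \<phi> p fA"
abbreviation "mXt \<equiv> meanXt M X p fA"
abbreviation "sXt \<equiv> sqmXt M X p fA"

definition consumed_age_density :: "real \<Rightarrow> real \<Rightarrow> real" where
  "consumed_age_density s a = indicator {0..} a * fAt p fA s a"

lemma p_measurable[measurable]: "(\<lambda>x. p (fst x) (snd x)) \<in> borel_measurable (lborel \<Otimes>\<^sub>M lborel)"
  unfolding lborel_prod using p_meas by simp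

lemma p_swap_measurable[measurable]: "(\<lambda>x. p (snd x) (fst x)) \<in> borel_measurable (lborel \<Otimes>\<^sub>M lborel)"
  using measurable_pair_swap[OF p_measurable] by simp

lemma p_measurable_fst: "(\<lambda>a. p a s) \<in> borel_measurable lborel"
proof -
  have "(\<lambda>a. p (fst (a, s)) (snd (a, s))) \<in> borel_measurable lborel"
    by (rule measurable_compose[OF _ p_measurable]) measurable
  then show ?thesis by simp
qed

lemma fA_measurable[measurable]: "fA \<in> borel_measurable lborel"
  using fA_meas by simp

lemma phi_measurable[measurable]: "\<phi> \<in> borel_measurable lborel"
  using phi_meas by simp

lemma cons_norm_measurable[measurable]: "cons_norm p fA \<in> borel_measurable lborel"
proof -
  have "(\<lambda>(s, u). indicator {0..} u *\<^sub>R (p u s * fA u) :: real) \<in> borel_measurable (lborel \<Otimes>\<^sub>M lborel)"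
    unfolding case_prod_beta by measurable
  from lborel.borel_measurable_lebesgue_integral[OF this]
  show ?thesis unfolding cons_norm_def[abs_def] set_lebesgue_integral_def .
qed

lemma psi_measurable[measurable]: "\<psi> \<in> borel_measurable lborel"
  unfolding psi_def[abs_def] by measurable

lemma psi_nonneg: "s \<ge> 0 \<Longrightarrow> 0 \<le> \<psi> s"
  unfolding psi_def using phi_nonneg norm_pos[of s] by simp

lemma consumed_age_density_measurable[measurable]:
  "consumed_age_density s \<in> borel_measurable lborel"
  unfolding consumed_age_density_def[abs_def] fAt_def using p_measurable_fst[of s] by measurable

lemma consumed_age_density_pair_measurable[measurable]:
  "(\<lambda>x. consumed_age_density (snd x) (fst x)) \<in> borel_measurable (lborel \<Otimes>\<^sub>M lborel)"
  unfolding consumed_age_density_def fAt_def by measurable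

lemma consumed_age_density_nonneg: "s \<ge> 0 \<Longrightarrow> 0 \<le> consumed_age_density s a"
  unfolding consumed_age_density_def fAt_def
  using p_range[of a s] fA_nonneg[of a] norm_pos[of s] by (auto simp: indicator_def)

lemma
  assumes "s \<ge> 0"
  shows consumed_age_density_integrable: "integrable lborel (consumed_age_density s)"
    and integral_consumed_age_density: "integral\<^sup>L lborel (consumed_age_density s) = 1"
proof -
  have "integrable lborel (\<lambda>a. indicator {0..} a * (p a s * fA a))"
  proof (rule Bochner_Integration.integrable_bound)
    show "integrable lborel (\<lambda>a. indicator {0..} a * fA a)"
      using fA_int by (simp add: set_integrable_def)
    show "AE a in lborel. norm (indicator {0..} a * (p a s * fA a)) \<le> norm (indicator {0..} a * fA a :: real)"
      using p_range[OF _ assms] fA_nonneg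
      by (intro AE_I2) (auto simp: indicator_def abs_mult intro: mult_left_le_one_le)
  qed (use p_measurable_fst[of s] in measurable)
  moreover have "consumed_age_density s = (\<lambda>a. indicator {0..} a * (p a s * fA a) / cons_norm p fA s)"
    by (auto simp: consumed_age_density_def fAt_def)
  ultimately show "integrable lborel (consumed_age_density s)"
    and "integral\<^sup>L lborel (consumed_age_density s) = 1"
    using norm_pos[OF assms] by (simp_all add: cons_norm_def set_lebesgue_integral_def)
qed

lemma p_cross:
  assumes "0 \<le> a" "a \<le> b" "0 \<le> s" "s \<le> r"
  shows "p a r * p b s \<le> p b r * p a s"
proof (cases "s = r")
  case False
  with assms have "s < r" by simp
  show ?thesis
    using assms p_range[of a s] p_range[of a r] p_range[of b s] p_range[of b r]
    by (intro mono_ext_ratio_imp_cross_le[OF B[OF \<open>0 \<le> s\<close> \<open>s < r\<close>]]) auto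
qed (simp add: mult.commute)

lemma consumed_age_density_cross:
  assumes "0 \<le> s" "s \<le> r" "a \<le> b"
  shows "consumed_age_density r a * consumed_age_density s b \<le>
         consumed_age_density r b * consumed_age_density s a"
proof (cases "0 \<le> a")
  case True
  have "(p a r * p b s) * (fA a * fA b) \<le> (p b r * p a s) * (fA a * fA b)"
    using p_cross[OF True assms(3,1,2)] fA_nonneg True assms by (intro mult_right_mono) auto
  then have "(p a r * fA a) * (p b s * fA b) / (cons_norm p fA r * cons_norm p fA s)
      \<le> (p b r * fA b) * (p a s * fA a) / (cons_norm p fA r * cons_norm p fA s)"
    using norm_pos[of r] norm_pos[of s] assms by (intro divide_right_mono) (auto simp: ac_simps)
  then show ?thesis using True assms by (simp add: consumed_age_density_def fAt_def)
next
  case False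
  then show ?thesis using consumed_age_density_nonneg assms
    by (simp add: consumed_age_density_def)
qed

lemma sqmX_consumed_integrable:
  "s \<ge> 0 \<Longrightarrow> integrable lborel (\<lambda>a. sqmX M X a * consumed_age_density s a)"
  using Xt_mom unfolding set_integrable_def consumed_age_density_def by (simp add: ac_simps)

lemma sqmX_mult_consumed_age_density:
  "moment_ratio a * (mean_burden a * consumed_age_density s a) = sqmX M X a * consumed_age_density s a"
  using moment_ratio_mult_mean_burden[of a]
  by (cases "0 \<le> a") (auto simp: consumed_age_density_def)

lemma meanXt_eq: "mXt s = integral\<^sup>L lborel (\<lambda>a. mean_burden a * consumed_age_density s a)"
  unfolding meanXt_def set_lebesgue_integral_def consumed_age_density_def mean_burden_def
  by (intro Bochner_Integration.integral_cong) (auto simp: indicator_def)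

lemma sqmXt_eq:
  "sXt s = integral\<^sup>L lborel (\<lambda>a. moment_ratio a * (mean_burden a * consumed_age_density s a))"
  unfolding sqmX_mult_consumed_age_density sqmXt_def set_lebesgue_integral_def
  by (simp add: consumed_age_density_def ac_simps)

lemma mean_consumed_integrable:
  assumes "s \<ge> 0"
  shows "integrable lborel (\<lambda>a. mean_burden a * consumed_age_density s a)"
proof (rule Bochner_Integration.integrable_bound[OF sqmX_consumed_integrable[OF assms]])
  show "AE a in lborel. norm (mean_burden a * consumed_age_density s a)
      \<le> norm (sqmX M X a * consumed_age_density s a)"
  proof (intro AE_I2)
    fix a :: real
    have "mean_burden a * consumed_age_density s a \<le> sqmX M X a * consumed_age_density s a"
      using meanX_le_sqmX[of a] consumed_age_density_nonneg[OF assms, of a]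
      by (cases "0 \<le> a") (auto simp: mean_burden_def consumed_age_density_def intro: mult_right_mono)
    then show "norm (mean_burden a * consumed_age_density s a)
      \<le> norm (sqmX M X a * consumed_age_density s a)"
      using mean_burden_nonneg[of a] consumed_age_density_nonneg[OF assms, of a] by simp
  qed
qed measurable

lemma moment_ratio_consumed_integrable:
  assumes "s \<ge> 0"
  shows "integrable lborel (\<lambda>a. moment_ratio a * consumed_age_density s a)"
proof (rule Bochner_Integration.integrable_bound)
  show "integrable lborel (\<lambda>a. moment_ratio 1 * consumed_age_density s a +
      sqmX M X a * consumed_age_density s a / meanX M X 1)"
    using consumed_age_density_integrable[OF assms] sqmX_consumed_integrable[OF assms] by simp
  show "AE a in lborel. norm (moment_ratio a * consumed_age_density s a) \<le>
      norm (moment_ratio 1 * consumed_age_density s a + sqmX M X a * consumed_age_density s a / meanX M X 1)"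
  proof (intro AE_I2)
    fix a :: real
    have "moment_ratio a * consumed_age_density s a \<le>
        (moment_ratio 1 + sqmX M X a / meanX M X 1) * consumed_age_density s a"
      using moment_ratio_le[of a] consumed_age_density_nonneg[OF assms, of a]
      by (cases "0 \<le> a") (auto simp: consumed_age_density_def intro: mult_right_mono)
    then show "norm (moment_ratio a * consumed_age_density s a) \<le>
        norm (moment_ratio 1 * consumed_age_density s a + sqmX M X a * consumed_age_density s a / meanX M X 1)"
      using moment_ratio_nonneg[of a] consumed_age_density_nonneg[OF assms, of a]
      by (simp add: algebra_simps)
  qed
qed measurable

lemma meanXt_nonneg: "s \<ge> 0 \<Longrightarrow> 0 \<le> mXt s"
  unfolding meanXt_eq using mean_burden_nonneg consumed_age_density_nonneg by simp

lemma sqmXt_nonneg: "s \<ge> 0 \<Longrightarrow> 0 \<le> sXt s"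
  unfolding sqmXt_eq using mean_burden_nonneg moment_ratio_nonneg consumed_age_density_nonneg by simp

lemma meanXt_mono:
  assumes "0 \<le> s" "s \<le> r"
  shows "mXt s \<le> mXt r"
proof -
  have "integral\<^sup>L lborel (\<lambda>a. mean_burden a * consumed_age_density s a) / integral\<^sup>L lborel (consumed_age_density s)
      \<le> integral\<^sup>L lborel (\<lambda>a. mean_burden a * consumed_age_density r a) / integral\<^sup>L lborel (consumed_age_density r)"
    using assms consumed_age_density_cross[OF assms]
    by (intro weighted_mean_mono_of_likelihood_ratio)
      (auto simp: consumed_age_density_integrable integral_consumed_age_density mean_consumed_integrable
        consumed_age_density_nonneg mean_burden_nonneg mono_mean_burden)
  then show ?thesis using assms by (simp add: integral_consumed_age_density meanXt_eq)
qed

lemma sqmXt_div_meanXt_mono: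
  assumes "0 \<le> s" "s \<le> r"
  shows "sXt s / mXt s \<le> sXt r / mXt r"
proof (cases "mXt s = 0")
  case True
  then show ?thesis using assms meanXt_nonneg sqmXt_nonneg by simp
next
  case False
  then have "0 < mXt s" using meanXt_nonneg assms by (simp add: less_le)
  moreover have "0 < mXt r" using meanXt_mono[OF assms] calculation by simp
  ultimately show ?thesis unfolding sqmXt_eq meanXt_eq
  proof (intro weighted_mean_mono_of_likelihood_ratio)
    fix a b :: real assume "a < b"
    from mult_right_mono[OF consumed_age_density_cross[OF assms less_imp_le[OF this]],
        of "mean_burden a * mean_burden b"]
    show "mean_burden a * consumed_age_density r a * (mean_burden b * consumed_age_density s b)
      \<le> mean_burden b * consumed_age_density r b * (mean_burden a * consumed_age_density s a)"
      using mean_burden_nonneg by (simp add: mult_ac)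
  qed (use assms in \<open>auto simp: mean_consumed_integrable sqmX_mult_consumed_age_density
        sqmX_consumed_integrable consumed_age_density_nonneg mean_burden_nonneg
        moment_ratio_nonneg mono_moment_ratio meanXt_eq\<close>)
qed

lemma integral_moment_ratio_le:
  assumes "s > 0"
  shows "integral\<^sup>L lborel (\<lambda>a. moment_ratio a * consumed_age_density s a) \<le> sXt s / mXt s"
proof -
  have "0 \<le> s" using assms by simp
  have "integral\<^sup>L lborel (\<lambda>a. moment_ratio a * consumed_age_density s a) / integral\<^sup>L lborel (consumed_age_density s)
      \<le> sXt s / mXt s"
    unfolding sqmXt_eq meanXt_eq
  proof (rule weighted_mean_mono_of_likelihood_ratio)
    fix a b :: real assume "a < b"
    from mult_right_mono[OF mono_mean_burden[THEN monoD, OF less_imp_le[OF this]],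
        of "consumed_age_density s a * consumed_age_density s b"]
    show "mean_burden a * consumed_age_density s a * consumed_age_density s b
      \<le> mean_burden b * consumed_age_density s b * consumed_age_density s a"
      using consumed_age_density_nonneg[OF \<open>0 \<le> s\<close>] by (simp add: mult_ac)
  qed (use \<open>0 \<le> s\<close> meanXt_pos[OF assms] in \<open>auto simp: mean_consumed_integrable
        sqmX_mult_consumed_age_density sqmX_consumed_integrable consumed_age_density_nonneg
        mean_burden_nonneg moment_ratio_nonneg mono_moment_ratio meanXt_eq
        consumed_age_density_integrable integral_consumed_age_density
        moment_ratio_consumed_integrable\<close>)
  then show ?thesis using \<open>0 \<le> s\<close> by (simp add: integral_consumed_age_density)
qed


definition consumed_ratio :: "real \<Rightarrow> real" where
  "consumed_ratio s = sXt (max s 0) / mXt (max s 0)"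

lemma consumed_ratio_eq: "s \<ge> 0 \<Longrightarrow> consumed_ratio s = sXt s / mXt s"
  by (simp add: consumed_ratio_def)

lemma consumed_ratio_nonneg: "0 \<le> consumed_ratio s"
  by (simp add: consumed_ratio_def meanXt_nonneg sqmXt_nonneg)

lemma mono_consumed_ratio: "mono consumed_ratio"
  unfolding consumed_ratio_def by (auto intro!: monoI sqmXt_div_meanXt_mono)

lemma consumed_ratio_measurable[measurable]: "consumed_ratio \<in> borel_measurable lborel"
  using borel_measurable_mono[OF mono_consumed_ratio] by simp

lemma nn_integral_moment_ratio_le:
  assumes "s > 0"
  shows "(\<integral>\<^sup>+ a. ennreal (moment_ratio a * consumed_age_density s a) \<partial>lborel) \<le> ennreal (sXt s / mXt s)"
proof -
  have "0 \<le> s" using assms by simp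
  have "(\<integral>\<^sup>+ a. ennreal (moment_ratio a * consumed_age_density s a) \<partial>lborel) =
      ennreal (integral\<^sup>L lborel (\<lambda>a. moment_ratio a * consumed_age_density s a))"
    using moment_ratio_consumed_integrable[OF \<open>0 \<le> s\<close>] moment_ratio_nonneg consumed_age_density_nonneg[OF \<open>0 \<le> s\<close>]
    by (intro nn_integral_eq_integral) auto
  then show ?thesis using integral_moment_ratio_le[OF assms] by (simp add: ennreal_leI)
qed

context
  fixes t :: real
  assumes t: "t > 0"
begin

lemma window_psi_integrable: "integrable lborel (\<lambda>s. indicator {0..t} s * \<psi> s)"
  using psi_int[of t] t by (simp add: set_integrable_def)

text \<open>Positivity of \<open>meanY\<close> forces integrability, a non-integrable function having integral 0.\<close>

lemma window_meanXt_psi_integrable: "integrable lborel (\<lambda>s. indicator {0..t} s * (mXt s * \<psi> s))"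
proof (rule ccontr)
  assume "\<not> ?thesis"
  then have "meanY M X p fA \<phi> t = 0"
    unfolding meanY_def set_lebesgue_integral_def by (simp add: not_integrable_integral_eq)
  then show False using meanY_pos[OF t] by simp
qed

lemma window_sqmXt_psi_integrable: "integrable lborel (\<lambda>s. indicator {0..t} s * (sXt s * \<psi> s))"
  using Y_mom[of t] t by (simp add: set_integrable_def)

lemma consumed_ratio_window_integrable:
  assumes int: "integrable lborel (\<lambda>s. indicator {0..t} s * w s)"
    and w_nonneg: "\<And>s. 0 \<le> s \<Longrightarrow> s \<le> t \<Longrightarrow> 0 \<le> w s"
  shows "integrable lborel (\<lambda>s. consumed_ratio s * (indicator {0..t} s * w s))"
proof (rule Bochner_Integration.integrable_bound)
  show "integrable lborel (\<lambda>s. consumed_ratio t * (indicator {0..t} s * w s))"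
    using int by simp
  show "(\<lambda>s. consumed_ratio s * (indicator {0..t} s * w s)) \<in> borel_measurable lborel"
    using borel_measurable_integrable[OF int] by measurable
  show "AE s in lborel. norm (consumed_ratio s * (indicator {0..t} s * w s))
      \<le> norm (consumed_ratio t * (indicator {0..t} s * w s))"
    using mono_consumed_ratio[THEN monoD, of _ t] consumed_ratio_nonneg w_nonneg
    by (intro AE_I2) (auto simp: indicator_def abs_mult intro: mult_right_mono)
qed

lemma varY_div_meanY_le: "varY M X p fA \<phi> t / meanY M X p fA \<phi> t \<le> sXt t / mXt t"
proof -
  have "sXt s * \<psi> s \<le> sXt t / mXt t * (mXt s * \<psi> s)" if "0 < s" "s \<le> t" for s
  proof -
    have "sXt s / mXt s \<le> sXt t / mXt t" using sqmXt_div_meanXt_mono that by simp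
    then have "sXt s \<le> sXt t / mXt t * mXt s" using meanXt_pos[OF \<open>0 < s\<close>] by (simp add: field_simps)
    moreover have "0 \<le> \<psi> s" using psi_nonneg that by simp
    ultimately show ?thesis by (metis mult.assoc mult_right_mono)
  qed
  then have "integral\<^sup>L lborel (\<lambda>s. indicator {0..t} s * (sXt s * \<psi> s)) \<le>
      integral\<^sup>L lborel (\<lambda>s. sXt t / mXt t * (indicator {0..t} s * (mXt s * \<psi> s)))"
    using window_sqmXt_psi_integrable window_meanXt_psi_integrable AE_lborel_singleton[of 0]
    by (intro integral_mono_AE) (auto simp: indicator_def elim!: eventually_mono)
  then have "varY M X p fA \<phi> t \<le> sXt t / mXt t * meanY M X p fA \<phi> t"
    by (simp add: varY_def meanY_def set_lebesgue_integral_def)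
  then show ?thesis using meanY_pos[OF t] by (simp add: divide_le_eq mult.commute)
qed

text \<open>The weights \<open>\<psi>\<close> and \<open>mXt * \<psi>\<close> on \<open>[0, t]\<close> are in likelihood-ratio order because
  \<open>mXt\<close> is non-decreasing.\<close>

lemma time_average_le_varY_div_meanY:
  "(1 / Psi \<phi> p fA t) * set_lebesgue_integral lborel {0..t} (\<lambda>s. (sXt s / mXt s) * \<psi> s)
    \<le> varY M X p fA \<phi> t / meanY M X p fA \<phi> t"
proof -
  let ?q1 = "\<lambda>s. indicator {0..t} s * \<psi> s"
  let ?q2 = "\<lambda>s. indicator {0..t} s * (mXt s * \<psi> s)"
  have ratio_q1: "integral\<^sup>L lborel (\<lambda>s. consumed_ratio s * ?q1 s) =
      set_lebesgue_integral lborel {0..t} (\<lambda>s. (sXt s / mXt s) * \<psi> s)"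
    unfolding set_lebesgue_integral_def
    by (intro Bochner_Integration.integral_cong) (auto simp: indicator_def consumed_ratio_eq)
  have ratio_q2: "integral\<^sup>L lborel (\<lambda>s. consumed_ratio s * ?q2 s) = varY M X p fA \<phi> t"
    unfolding varY_def set_lebesgue_integral_def
  proof (rule integral_cong_AE)
    show "AE s in lborel. consumed_ratio s * ?q2 s = indicator {0..t} s *\<^sub>R (sXt s * \<psi> s)"
      using AE_lborel_singleton[of 0]
    proof (rule eventually_mono)
      fix s :: real assume "s \<noteq> 0"
      then show "consumed_ratio s * ?q2 s = indicator {0..t} s *\<^sub>R (sXt s * \<psi> s)"
        using meanXt_pos[of s] by (cases "s \<in> {0..t}") (auto simp: consumed_ratio_eq)
    qed
    show "(\<lambda>s. consumed_ratio s * ?q2 s) \<in> borel_measurable lborel"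
      using borel_measurable_integrable[OF window_meanXt_psi_integrable] by measurable
    show "(\<lambda>s. indicator {0..t} s *\<^sub>R (sXt s * \<psi> s)) \<in> borel_measurable lborel"
      using borel_measurable_integrable[OF window_sqmXt_psi_integrable] by simp
  qed
  have "integral\<^sup>L lborel (\<lambda>s. consumed_ratio s * ?q1 s) / integral\<^sup>L lborel ?q1 \<le>
        integral\<^sup>L lborel (\<lambda>s. consumed_ratio s * ?q2 s) / integral\<^sup>L lborel ?q2"
  proof (rule weighted_mean_mono_of_likelihood_ratio)
    fix a b :: real assume "a < b"
    have "mXt a * (\<psi> a * \<psi> b) \<le> mXt b * (\<psi> a * \<psi> b)" if "0 \<le> a" "b \<le> t"
      using that \<open>a < b\<close> meanXt_mono[of a b] psi_nonneg[of a] psi_nonneg[of b]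
      by (intro mult_right_mono) auto
    then show "?q2 a * ?q1 b \<le> ?q2 b * ?q1 a" by (auto simp: indicator_def mult_ac)
  qed (use window_psi_integrable window_meanXt_psi_integrable psi_nonneg meanXt_nonneg
         consumed_ratio_window_integrable consumed_ratio_nonneg mono_consumed_ratio
         Psi_pos[OF t] meanY_pos[OF t]
       in \<open>auto simp: indicator_def Psi_def meanY_def set_lebesgue_integral_def\<close>)
  then show ?thesis
    unfolding ratio_q1 ratio_q2 by (simp add: Psi_def meanY_def set_lebesgue_integral_def)
qed

text \<open>By Tonelli the left-hand side is the \<open>\<psi>\<close>-average over \<open>s \<in> [0, t]\<close> of
  \<open>\<integral> moment_ratio * consumed_age_density s\<close>, which is bounded by \<open>sXt s / mXt s\<close>.\<close>

lemma age_average_le_time_average: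
  "set_lebesgue_integral lborel {0..}
     (\<lambda>r. (varX M X r / meanX M X r + meanX M X r) *
          ((1 / Psi \<phi> p fA t) * set_lebesgue_integral lborel {0..t} (\<lambda>s. fAt p fA s r * \<psi> s)))
   \<le> (1 / Psi \<phi> p fA t) * set_lebesgue_integral lborel {0..t} (\<lambda>s. (sXt s / mXt s) * \<psi> s)"
proof -
  define H where "H = (\<lambda>r s. moment_ratio r * consumed_age_density s r * (indicator {0..t} s * \<psi> s))"
  define G where "G = (\<lambda>s. consumed_ratio s * (indicator {0..t} s * \<psi> s))"
  have pointwise: "indicator {0..} r *\<^sub>R ((varX M X r / meanX M X r + meanX M X r) *
        ((1 / Psi \<phi> p fA t) * set_lebesgue_integral lborel {0..t} (\<lambda>s. fAt p fA s r * \<psi> s)))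
      = (1 / Psi \<phi> p fA t) * integral\<^sup>L lborel (H r)" for r
  proof (cases "0 \<le> r")
    case True
    then show ?thesis
      unfolding moment_ratio_eq[OF True] set_lebesgue_integral_def
      by (simp add: H_def consumed_age_density_def indicator_def ac_simps
          flip: integral_mult_right_zero)
  qed (simp add: H_def consumed_age_density_def)
  have lhs: "set_lebesgue_integral lborel {0..}
     (\<lambda>r. (varX M X r / meanX M X r + meanX M X r) *
          ((1 / Psi \<phi> p fA t) * set_lebesgue_integral lborel {0..t} (\<lambda>s. fAt p fA s r * \<psi> s)))
     = integral\<^sup>L lborel (\<lambda>r. (1 / Psi \<phi> p fA t) * integral\<^sup>L lborel (H r))"
    unfolding set_lebesgue_integral_def[where A="{0..}"] by (simp only: pointwise)
  have rhs: "set_lebesgue_integral lborel {0..t} (\<lambda>s. (sXt s / mXt s) * \<psi> s) = integral\<^sup>L lborel G"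
    unfolding G_def set_lebesgue_integral_def
    by (intro Bochner_Integration.integral_cong) (auto simp: indicator_def consumed_ratio_eq)
  have inner: "(\<integral>\<^sup>+ r. ennreal (H r s) \<partial>lborel) \<le> ennreal (G s)" if "s \<noteq> 0" for s
  proof (cases "s \<in> {0..t}")
    case True
    with that have "0 < s" by simp
    have "(\<integral>\<^sup>+ r. ennreal (H r s) \<partial>lborel) =
        ennreal (\<psi> s) * (\<integral>\<^sup>+ r. ennreal (moment_ratio r * consumed_age_density s r) \<partial>lborel)"
      using True psi_nonneg[of s]
      by (subst nn_integral_cmult[symmetric])
        (auto simp: H_def ennreal_mult'[symmetric] mult_ac intro!: nn_integral_cong)
    also have "\<dots> \<le> ennreal (\<psi> s) * ennreal (sXt s / mXt s)"
      using nn_integral_moment_ratio_le[OF \<open>0 < s\<close>] by (rule mult_left_mono) simp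
    finally show ?thesis
      using True psi_nonneg[of s] by (simp add: G_def consumed_ratio_eq ennreal_mult'[symmetric] ac_simps)
  qed (simp add: H_def)
  have "integral\<^sup>L lborel (\<lambda>r. integral\<^sup>L lborel (H r)) \<le> integral\<^sup>L lborel G"
  proof (rule integral_inner_integral_le)
    show "(\<lambda>x. H (fst x) (snd x)) \<in> borel_measurable (lborel \<Otimes>\<^sub>M lborel)"
      unfolding H_def by measurable
    show "0 \<le> H r s" for r s
      using moment_ratio_nonneg consumed_age_density_nonneg psi_nonneg
      by (auto simp: H_def indicator_def consumed_age_density_def)
    show "AE s in lborel. (\<integral>\<^sup>+ r. ennreal (H r s) \<partial>lborel) \<le> ennreal (G s)"
      using AE_lborel_singleton[of 0] by (auto elim!: eventually_mono inner)
    show "integrable lborel G"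
      unfolding G_def using psi_nonneg by (intro consumed_ratio_window_integrable window_psi_integrable)
    show "0 \<le> G s" for s
      unfolding G_def using consumed_ratio_nonneg psi_nonneg by (auto simp: indicator_def)
  qed
  then show ?thesis
    unfolding lhs rhs integral_mult_right_zero using Psi_pos[OF t] by (intro mult_left_mono) auto
qed

end

end

theorem theorem1:
  fixes M :: "'w measure" and X :: "real \<Rightarrow> 'w \<Rightarrow> nat"
    and fA \<phi> :: "real \<Rightarrow> real" and p :: "real \<Rightarrow> real \<Rightarrow> real" and t :: real
  assumes M: "prob_space M"
    and X_meas: "\<And>r. r \<ge> 0 \<Longrightarrow> X r \<in> measurable M (count_space UNIV)"
    and X_0: "\<And>\<omega>. \<omega> \<in> space M \<Longrightarrow> X 0 \<omega> = 0"
    and X_mono: "\<And>\<omega> r r'. \<omega> \<in> space M \<Longrightarrow> 0 \<le> r \<Longrightarrow> r \<le> r' \<Longrightarrow> X r \<omega> \<le> X r' \<omega>"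
    and X_mom: "\<And>r. r \<ge> 0 \<Longrightarrow> integrable M (\<lambda>\<omega>. (real (X r \<omega>))\<^sup>2)"
    and fA_meas: "fA \<in> borel_measurable borel"
    and fA_nonneg: "\<And>a. a \<ge> 0 \<Longrightarrow> fA a \<ge> 0"
    and fA_int: "set_integrable lborel {0..} fA"
    and fA_one: "set_lebesgue_integral lborel {0..} fA = 1"
    and phi_meas: "\<phi> \<in> borel_measurable borel"
    and phi_nonneg: "\<And>s. s \<ge> 0 \<Longrightarrow> \<phi> s \<ge> 0"
    and p_meas: "(\<lambda>x. p (fst x) (snd x)) \<in> borel_measurable borel"
    and p_range: "\<And>u s. u \<ge> 0 \<Longrightarrow> s \<ge> 0 \<Longrightarrow> 0 \<le> p u s \<and> p u s \<le> 1"
    and psi_int: "\<And>T. T \<ge> 0 \<Longrightarrow> set_integrable lborel {0..T} (psi \<phi> p fA)"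
    and Xt_mom: "\<And>s. s \<ge> 0 \<Longrightarrow> set_integrable lborel {0..} (\<lambda>a. sqmX M X a * fAt p fA s a)"
    and Y_mom: "\<And>T. T \<ge> 0 \<Longrightarrow>
                  set_integrable lborel {0..T} (\<lambda>s. sqmXt M X p fA s * psi \<phi> p fA s)"
    and norm_pos: "\<And>s. s \<ge> 0 \<Longrightarrow> cons_norm p fA s > 0"
    and meanX_pos: "\<And>r. r > 0 \<Longrightarrow> meanX M X r > 0"
    and meanXt_pos: "\<And>s. s > 0 \<Longrightarrow> meanXt M X p fA s > 0"
    and Psi_pos: "\<And>T. T > 0 \<Longrightarrow> Psi \<phi> p fA T > 0"
    and meanY_pos: "\<And>T. T > 0 \<Longrightarrow> meanY M X p fA \<phi> T > 0"
    and A: "\<And>s r. 0 \<le> s \<Longrightarrow> s \<le> r \<Longrightarrow> lr_le (pmfX M X s) (pmfX M X r)"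
    and B: "\<And>s r. 0 \<le> s \<Longrightarrow> s < r \<Longrightarrow>
              mono_on {u. u \<ge> 0 \<and> (p u s > 0 \<or> p u r > 0)} (\<lambda>u. ext_ratio (p u r) (p u s))"
    and t_pos: "t > 0"
  shows "(varY M X p fA \<phi> t / meanY M X p fA \<phi> t \<le> sqmXt M X p fA t / meanXt M X p fA t) \<and>
         (varY M X p fA \<phi> t / meanY M X p fA \<phi> t \<ge>
           (1 / Psi \<phi> p fA t) * set_lebesgue_integral lborel {0..t}
              (\<lambda>s. (sqmXt M X p fA s / meanXt M X p fA s) * psi \<phi> p fA s)) \<and>
         ((1 / Psi \<phi> p fA t) * set_lebesgue_integral lborel {0..t}
              (\<lambda>s. (sqmXt M X p fA s / meanXt M X p fA s) * psi \<phi> p fA s)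
         \<ge> set_lebesgue_integral lborel {0..}
              (\<lambda>r. (varX M X r / meanX M X r + meanX M X r) *
                   ((1 / Psi \<phi> p fA t) * set_lebesgue_integral lborel {0..t}
                      (\<lambda>s. fAt p fA s r * psi \<phi> p fA s))))"
proof -
  interpret predator_prey M X fA \<phi> p
    by (intro predator_prey.intro parasite_burden.intro predator_prey_axioms.intro)
      (fact M X_meas X_0 X_mono X_mom meanX_pos A fA_meas fA_nonneg fA_int
          phi_meas phi_nonneg p_meas p_range psi_int Xt_mom Y_mom norm_pos meanXt_pos Psi_pos
          meanY_pos B)+
  show ?thesis
    using varY_div_meanY_le[OF t_pos] time_average_le_varY_div_meanY[OF t_pos]
      age_average_le_time_average[OF t_pos]
    by simp
qed

end
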